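(* Consider the parabola $y=\frac{a_N}{a_D}x^2+\frac{b_N}{b_D}x+c$, where $\frac{a_N}{a_D}\ne0$ and $\frac{b_N}{b_D}$ are reduced fractions with positive denominators and $c\in\mathbb R$, and let $\bar H=\mathrm{lcm}(a_D,b_D)$. Its horizontal period $H$ equals $\bar H$ or $\bar H/2$; precisely: (i) if $a_D\equiv0\pmod4$, then $H=\mathrm{lcm}(a_D/2,b_D)$; (ii) if $a_D\equiv2\pmod4$ and $b_D\equiv2\pmod4$, then $H=\mathrm{lcm}(a_D/2,b_D/2)$; (iii) in all other cases, $H=\mathrm{lcm}(a_D,b_D)$.
   Context: The horizontal period $H$ of the parabola $y=\alpha x^2+\beta x+c$ (with $\alpha=a_N/a_D$, $\beta=b_N/b_D$) is the smallest positive integer $H$ such that $z=2\alpha H$ and $w=\alpha H^2+\beta H$ are both integers; equivalently, the smallest positive integer $H$ for which there is an affine map of the form $(x,y)\mapsto(x+H,\ zx+y+w)$ mapping both $\mathbb Z^2$ and the parabola onto themselves. *)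

theory Defs
  imports Complex_Main
begin

text \<open>Horizontal period of the parabola y = alpha x^2 + beta x + c: the smallest positive
integer H such that 2 alpha H and alpha H^2 + beta H are both integers.
(The constant term c plays no role.)\<close>
definition horizontal_period :: "real \<Rightarrow> real \<Rightarrow> nat" where
  "horizontal_period \<alpha> \<beta> =
     (LEAST H::nat. H > 0 \<and> 2 * \<alpha> * real H \<in> \<int> \<and> \<alpha> * (real H)^2 + \<beta> * real H \<in> \<int>)"

end

theory Submission
  imports Defs
begin

text \<open>Write \<alpha> = a/d and \<beta> = b/e. Clearing denominators, H is a period iff d | 2H and
  de | aeH^2 + bdH; every such H also satisfies e | 2H, so lcm(d,e) | 2H, while lcm(d,e) is itself
  a period. Hence any period L dividing all periods is the least one and equals lcm(d,e) or half of it.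
  Whenever d | H^2 the quadratic term drops out and the condition reads d | 2H and e | H: if 4 | d,
  then d | 2H already forces d | H^2, and outside the two exceptional cases parity forces d | H.
  If d and e are both 2 mod 4, then lcm(d/2,e/2) is a period by a parity count.\<close>

lemma dvd_double_iff_half_dvd:
  fixes d H :: int
  assumes "even d"
  shows "d dvd 2 * H \<longleftrightarrow> d div 2 dvd H"
proof -
  have "d = 2 * (d div 2)"
    using assms by simp
  then show ?thesis
    by (metis dvd_mult_cancel_left zero_neq_numeral)
qed

lemma dvd_square_if_dvd_double:
  fixes d H :: int
  assumes "4 dvd d" "d dvd 2 * H"
  shows "d dvd H^2"
proof -
  obtain k where k: "d = 4 * k"
    using assms(1) ..
  then have "2 * k dvd H"
    using dvd_double_iff_half_dvd[of d H] assms by simp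
  then obtain j where "H = 2 * k * j" ..
  then have "H^2 = d * (k * j^2)"
    by (simp add: k power2_eq_square algebra_simps)
  then show ?thesis by simp
qed

lemma dvd_if_dvd_double_even:
  fixes d H :: int
  assumes "d mod 4 = 2" "d dvd 2 * H" "even H"
  shows "d dvd H"
proof -
  have "even d" "odd (d div 2)"
    using assms(1) by presburger+
  then have "coprime 2 (d div 2)" "d div 2 dvd H"
    using assms(2) by (simp_all add: dvd_double_iff_half_dvd)
  then have "2 * (d div 2) dvd H"
    using assms(3) by (simp add: divides_mult)
  then show ?thesis
    using \<open>even d\<close> by simp
qed

lemma odd_if_coprime_even:
  fixes a d :: int
  assumes "coprime a d" "even d"
  shows "odd a"
  using assms by (metis coprime_common_divisor odd_one)

lemma eq_or_eq_double_if_dvd: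
  fixes L m :: int
  assumes "0 < L" "0 < m" "L dvd m" "m dvd 2 * L"
  shows "m = L \<or> m = 2 * L"
proof -
  obtain j where j: "m = L * j"
    using assms(3) ..
  have "0 < j"
    using assms(1,2) j by (simp add: zero_less_mult_iff)
  moreover have "L * j \<le> L * 2"
    using assms(1,4) j zdvd_imp_le by simp
  then have "j \<le> 2"
    using assms(1) by simp
  ultimately have "j = 1 \<or> j = 2" by auto
  then show ?thesis
    using j by auto
qed

definition is_period :: "int \<Rightarrow> int \<Rightarrow> int \<Rightarrow> int \<Rightarrow> int \<Rightarrow> bool" where
  "is_period a d b e H \<longleftrightarrow> d dvd 2 * H \<and> d * e dvd a * e * H^2 + b * d * H"

lemma horizontal_period_cond_iff_is_period:
  fixes a d b e H :: int
  assumes "d \<noteq> 0" "e \<noteq> 0" "coprime a d"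
  shows "(2 * (of_int a / of_int d) * of_int H \<in> (\<int> :: real set) \<and>
          (of_int a / of_int d) * (of_int H)^2 + (of_int b / of_int e) * of_int H \<in> (\<int> :: real set))
     \<longleftrightarrow> is_period a d b e H"
proof -
  have linear: "2 * (of_int a / of_int d) * of_int H = (of_int (2 * H * a) / of_int d :: real)"
    by simp
  have quadratic: "(of_int a / of_int d) * (of_int H)^2 + (of_int b / of_int e) * of_int H
      = (of_int (a * e * H^2 + b * d * H) / of_int (d * e) :: real)"
    using assms by (simp add: field_simps)
  have "d dvd 2 * H * a \<longleftrightarrow> d dvd 2 * H"
    using assms(3) by (simp add: coprime_commute coprime_dvd_mult_left_iff)
  then show ?thesis
    unfolding linear quadratic of_int_div_of_int_in_Ints_iff is_period_def using assms by simp
qed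

lemma horizontal_period_eqI:
  fixes a d b e L :: int
  assumes "d \<noteq> 0" "e \<noteq> 0" "coprime a d"
    and "L > 0" "is_period a d b e L" "\<And>H. is_period a d b e H \<Longrightarrow> L dvd H"
  shows "int (horizontal_period (of_int a / of_int d) (of_int b / of_int e)) = L"
proof -
  have "horizontal_period (of_int a / of_int d) (of_int b / of_int e)
      = (LEAST n::nat. n > 0 \<and> is_period a d b e (int n))"
    unfolding horizontal_period_def
    using horizontal_period_cond_iff_is_period[OF assms(1-3), of "int _"] by simp
  also have "\<dots> = nat L"
  proof (rule Least_equality)
    show "nat L > 0 \<and> is_period a d b e (int (nat L))"
      using assms(4,5) by simp
  next
    fix n :: nat
    assume "n > 0 \<and> is_period a d b e (int n)"
    then have "L \<le> int n"
      using assms(6) by (simp add: zdvd_imp_le)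
    then show "nat L \<le> n" by simp
  qed
  finally show ?thesis
    using assms(4) by simp
qed

lemma is_period_dvd_double:
  fixes a d b e H :: int
  assumes "d \<noteq> 0" "coprime b e" "is_period a d b e H"
  shows "e dvd 2 * H"
proof -
  obtain k where k: "2 * H = d * k"
    using assms(3) unfolding is_period_def by blast
  have "d * e dvd 2 * (a * e * H^2 + b * d * H)"
    using assms(3) unfolding is_period_def by (blast intro: dvd_mult)
  also have "2 * (a * e * H^2 + b * d * H) = d * (e * (a * H * k) + 2 * H * b)"
    by (simp add: power2_eq_square algebra_simps flip: k)
  finally have "e dvd e * (a * H * k) + 2 * H * b"
    using assms(1) by simp
  then have "e dvd 2 * H * b"
    by (simp add: dvd_add_right_iff)
  then show ?thesis
    using assms(2) by (simp add: coprime_commute coprime_dvd_mult_left_iff)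
qed

lemma is_period_iff_of_dvd_square:
  fixes a d b e H :: int
  assumes "d \<noteq> 0" "coprime b e" "d dvd H^2"
  shows "is_period a d b e H \<longleftrightarrow> d dvd 2 * H \<and> e dvd H"
proof -
  have "d * e dvd a * e * H^2"
    using assms(3) by (simp add: mult_dvd_mono)
  then have "d * e dvd a * e * H^2 + b * d * H \<longleftrightarrow> d * e dvd d * (H * b)"
    by (metis dvd_add_right_iff mult.commute mult.left_commute)
  also have "\<dots> \<longleftrightarrow> e dvd H"
    using assms(1,2) by (simp add: coprime_commute coprime_dvd_mult_left_iff)
  finally show ?thesis
    unfolding is_period_def by blast
qed

lemma lcm_eq_or_eq_double_period:
  fixes a d b e L :: int
  assumes "d > 0" "e > 0" "coprime b e"
    and "L > 0" "is_period a d b e L" "\<And>H. is_period a d b e H \<Longrightarrow> L dvd H"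
  shows "lcm d e = L \<or> lcm d e = 2 * L"
proof (rule eq_or_eq_double_if_dvd)
  have "d dvd (lcm d e)^2"
    by (simp add: dvd_power_iff_le power2_eq_square dvd_mult2)
  then have "is_period a d b e (lcm d e)"
    using assms(1,3) by (simp add: is_period_iff_of_dvd_square)
  then show "L dvd lcm d e"
    by (rule assms(6))
  have "d dvd 2 * L"
    using assms(5) unfolding is_period_def by simp
  moreover have "e dvd 2 * L"
    using is_period_dvd_double[OF _ assms(3,5)] assms(1) by simp
  ultimately show "lcm d e dvd 2 * L" by simp
qed (use assms lcm_pos_int in auto)

lemma is_period_iff_lcm_half_dvd:
  fixes a d b e H :: int
  assumes "d \<noteq> 0" "coprime b e" "4 dvd d"
  shows "is_period a d b e H \<longleftrightarrow> lcm (d div 2) e dvd H"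
proof -
  have "is_period a d b e H \<longleftrightarrow> d dvd 2 * H \<and> e dvd H"
    using is_period_iff_of_dvd_square[OF assms(1,2) dvd_square_if_dvd_double[OF assms(3)]]
    unfolding is_period_def by blast
  moreover have "even d"
    using dvd_trans[of 2 4 d] assms(3) by simp
  ultimately show ?thesis
    by (simp add: dvd_double_iff_half_dvd)
qed

lemma is_period_imp_dvd:
  fixes a d b e H :: int
  assumes "d \<noteq> 0" "coprime a d" "coprime b e"
    and "\<not> 4 dvd d" "\<not> (d mod 4 = 2 \<and> e mod 4 = 2)" "is_period a d b e H"
  shows "d dvd H"
proof (cases "even d")
  case False
  then have "coprime d 2"
    by simp
  moreover have "d dvd 2 * H"
    using assms(6) unfolding is_period_def by simp
  ultimately show ?thesis
    by (simp add: coprime_dvd_mult_right_iff)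
next
  case True
  then have d: "d mod 4 = 2" and "e mod 4 \<noteq> 2"
    using assms(4,5) by presburger+
  have "even H"
  proof (cases "even e")
    case True
    then have "4 dvd e"
      using \<open>e mod 4 \<noteq> 2\<close> by presburger
    also have "e dvd 2 * H"
      using is_period_dvd_double assms(1,3,6) by blast
    finally show ?thesis
      by presburger
  next
    case False
    have "2 dvd a * e * H^2 + b * d * H"
      using assms(6) \<open>even d\<close> unfolding is_period_def by (meson dvd_mult2 dvd_trans)
    then have "even (a * e * H^2)"
      using \<open>even d\<close> by simp
    moreover have "odd a"
      using odd_if_coprime_even assms(2) \<open>even d\<close> by blast
    ultimately show ?thesis
      using False by simp
  qed
  then show ?thesis
    using dvd_if_dvd_double_even d assms(6) unfolding is_period_def by blast
qed

lemma is_period_iff_lcm_dvd: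
  fixes a d b e H :: int
  assumes "d \<noteq> 0" "coprime a d" "coprime b e"
    and "\<not> 4 dvd d" "\<not> (d mod 4 = 2 \<and> e mod 4 = 2)"
  shows "is_period a d b e H \<longleftrightarrow> lcm d e dvd H"
proof
  assume "is_period a d b e H"
  moreover from this have "d dvd H"
    by (rule is_period_imp_dvd[OF assms])
  ultimately show "lcm d e dvd H"
    using is_period_iff_of_dvd_square[OF assms(1,3)] by (simp add: power2_eq_square)
next
  assume "lcm d e dvd H"
  then show "is_period a d b e H"
    using is_period_iff_of_dvd_square[OF assms(1,3)] by (simp add: power2_eq_square)
qed

lemma lcm_halves_dvd_period:
  fixes a d b e H :: int
  assumes "d \<noteq> 0" "coprime b e" "even d" "even e" "is_period a d b e H"
  shows "lcm (d div 2) (e div 2) dvd H"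
proof -
  have "d dvd 2 * H" "e dvd 2 * H"
    using assms(5) is_period_dvd_double[OF assms(1,2,5)] unfolding is_period_def by simp_all
  then have "d div 2 dvd H" "e div 2 dvd H"
    using assms(3,4) by (simp_all add: dvd_double_iff_half_dvd)
  then show ?thesis by simp
qed

text \<open>Here all of a, b, d/2, e/2 and the lcm L are odd, so a L (L/(d/2)) + b (L/(e/2)) is even,
  which supplies the missing factor 2 in the second period condition.\<close>
lemma is_period_lcm_halves:
  fixes a d b e :: int
  assumes "coprime a d" "coprime b e" "d mod 4 = 2" "e mod 4 = 2"
  shows "is_period a d b e (lcm (d div 2) (e div 2))"
proof -
  define d' e' L where "d' = d div 2" and "e' = e div 2" and "L = lcm d' e'"
  have d: "d = 2 * d'" and e: "e = 2 * e'" and "odd d'" "odd e'"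
    using assms(3,4) unfolding d'_def e'_def by presburger+
  have "odd a" "odd b"
    using odd_if_coprime_even assms(1,2) d e by simp_all
  obtain r where r: "L = d' * r"
    unfolding L_def by (meson dvd_lcm1 dvdE)
  obtain s where s: "L = e' * s"
    unfolding L_def by (meson dvd_lcm2 dvdE)
  have "L dvd d' * e'"
    unfolding L_def by (simp add: lcm_least)
  then have "odd L"
    using \<open>odd d'\<close> \<open>odd e'\<close> by (metis dvd_trans even_mult_iff)
  have "odd r"
    using \<open>odd L\<close> unfolding r by simp
  moreover have "odd s"
    using \<open>odd L\<close> unfolding s by simp
  ultimately have "even (a * L * r + b * s)"
    using \<open>odd a\<close> \<open>odd b\<close> \<open>odd L\<close> by simp
  then obtain w where w: "a * L * r + b * s = 2 * w" ..
  have "a * e * L^2 = 2 * d' * e' * (a * L * r)"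
    by (simp add: e power2_eq_square r algebra_simps)
  moreover have "b * d * L = 2 * d' * e' * (b * s)"
    by (simp add: d s algebra_simps)
  ultimately have "a * e * L^2 + b * d * L = 2 * d' * e' * (a * L * r + b * s)"
    by (simp only: distrib_left)
  also have "\<dots> = d * e * w"
    by (simp add: d e w)
  finally have "d * e dvd a * e * L^2 + b * d * L" by simp
  moreover have "d dvd 2 * L"
    using r d by simp
  ultimately show ?thesis
    unfolding is_period_def L_def d'_def e'_def by simp
qed

theorem proposition5:
  fixes aN aD bN bD :: int and c :: real
  assumes "aN \<noteq> 0" and "aD > 0" and "bD > 0"
    and "coprime aN aD" and "coprime bN bD"
  defines "H \<equiv> int (horizontal_period (real_of_int aN / real_of_int aD) (real_of_int bN / real_of_int bD))"
  shows "(H = lcm aD bD \<or> 2 * H = lcm aD bD)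
       \<and> (aD mod 4 = 0 \<longrightarrow> H = lcm (aD div 2) bD)
       \<and> (aD mod 4 = 2 \<and> bD mod 4 = 2 \<longrightarrow> H = lcm (aD div 2) (bD div 2))
       \<and> (\<not> (aD mod 4 = 0) \<and> \<not> (aD mod 4 = 2 \<and> bD mod 4 = 2) \<longrightarrow> H = lcm aD bD)"
proof -
  have period: "H = L \<and> (lcm aD bD = L \<or> lcm aD bD = 2 * L)"
    if "L > 0" "is_period aN aD bN bD L" "\<And>H. is_period aN aD bN bD H \<Longrightarrow> L dvd H" for L
    using horizontal_period_eqI lcm_eq_or_eq_double_period that assms(2-5)
    unfolding H_def by auto
  consider (four_dvd) "aD mod 4 = 0" | (both_2_mod_4) "aD mod 4 = 2 \<and> bD mod 4 = 2"
    | (generic) "\<not> (aD mod 4 = 0) \<and> \<not> (aD mod 4 = 2 \<and> bD mod 4 = 2)" by blast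
  then show ?thesis
  proof cases
    case four_dvd
    then have "aD div 2 > 0" "4 dvd aD"
      using assms(2) by presburger+
    then show ?thesis
      using period[of "lcm (aD div 2) bD"] is_period_iff_lcm_half_dvd[of aD bN bD aN] four_dvd assms(2,3,5)
      by (auto simp: lcm_pos_int)
  next
    case both_2_mod_4
    then have "aD div 2 > 0" "bD div 2 > 0" "even aD" "even bD"
      using assms(2,3) by presburger+
    then show ?thesis
      using period[OF _ is_period_lcm_halves lcm_halves_dvd_period] both_2_mod_4 assms(2-5)
      by (auto simp: lcm_pos_int)
  next
    case generic
    then have "\<not> 4 dvd aD"
      by presburger
    then show ?thesis
      using period[of "lcm aD bD"] is_period_iff_lcm_dvd[of aD aN bN bD] generic assms(2-5)
      by (auto simp: lcm_pos_int)
  qed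
qed

end
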